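(* For every $n\in\mathbb{N}$ there exists an oriented ordered graph $\overrightarrow{G}$ on $2n$ vertices in which every vertex has degree $1$, which contains no oriented ordered subgraph $\overrightarrow{M}_2$ and no oriented ordered subgraph $\overrightarrow{P}_3$, and which satisfies $\overrightarrow{\chi}(\overrightarrow{G})=n+1$.
   Context: An ordered graph is a finite simple undirected graph with a linear order on its vertices. An oriented ordered graph $\overrightarrow{G}$ is an ordered graph in which each edge is given exactly one direction. An ordered homomorphism between oriented ordered graphs is a vertex map $f$ with $f(u)\le f(v)$ whenever $u\le v$ and such that $(f(u),f(v))$ is an arc of the target whenever $(u,v)$ is an arc; the target is itself an oriented ordered graph (so it has no pair of opposite arcs). The oriented ordered colouring $\overrightarrow{\chi}(\overrightarrow{G})$ is the minimum number of vertices of an oriented ordered graph $H$ admitting an ordered homomorphism $\overrightarrow{G}\to H$. $\overrightarrow{M}_2$ denotes the ordered matching $M_2$ (vertices $a_1<b_1<a_2<b_2$, edges $\{a_1,b_1\},\{a_2,b_2\}$) with any orientation of its edges, and $\overrightarrow{P}_3$ denotes the ordered path $P_3$ (vertices $v_1<v_2<v_3$, edges $\{v_1,v_2\},\{v_2,v_3\}$) with any orientation of its edges; containing one as a subgraph means there is an injective order-preserving vertex map sending arcs to arcs. *)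

theory Defs
  imports Main
begin

definition oriented_ordered_graph :: "('a::linorder) set \<Rightarrow> ('a \<times> 'a) set \<Rightarrow> bool" where
  "oriented_ordered_graph V A \<longleftrightarrow> finite V \<and> A \<subseteq> V \<times> V \<and>
     (\<forall>u v. (u, v) \<in> A \<longrightarrow> u \<noteq> v \<and> (v, u) \<notin> A)"

definition ordered_hom ::
  "('a::linorder) set \<Rightarrow> ('a \<times> 'a) set \<Rightarrow> ('b::linorder) set \<Rightarrow> ('b \<times> 'b) set \<Rightarrow> ('a \<Rightarrow> 'b) \<Rightarrow> bool" where
  "ordered_hom V A W B f \<longleftrightarrow> f ` V \<subseteq> W \<and>
     (\<forall>u\<in>V. \<forall>v\<in>V. u \<le> v \<longrightarrow> f u \<le> f v) \<and>
     (\<forall>u v. (u, v) \<in> A \<longrightarrow> (f u, f v) \<in> B)"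

text \<open>Targets are taken with vertices in nat,
which is no restriction since every finite linear order embeds in nat.\<close>

definition oriented_ordered_chi :: "('a::linorder) set \<Rightarrow> ('a \<times> 'a) set \<Rightarrow> nat" where
  "oriented_ordered_chi V A = (LEAST k. \<exists>(W::nat set) B f.
      oriented_ordered_graph W B \<and> ordered_hom V A W B f \<and> card W = k)"

definition contains_ordered_subgraph ::
  "('a::linorder) set \<Rightarrow> ('a \<times> 'a) set \<Rightarrow> ('b::linorder) set \<Rightarrow> ('b \<times> 'b) set \<Rightarrow> bool" where
  "contains_ordered_subgraph V A P Q \<longleftrightarrow> (\<exists>f. f ` P \<subseteq> V \<and> strict_mono_on P f \<and>
      (\<forall>u v. (u, v) \<in> Q \<longrightarrow> (f u, f v) \<in> A))"

definition M2_orientations :: "(nat set \<times> (nat \<times> nat) set) set" where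
  "M2_orientations = {({0,1,2,3}, {e1, e2}) | e1 e2.
      e1 \<in> {(0,1),(1,0)} \<and> e2 \<in> {(2,3),(3,2)}}"

definition P3_orientations :: "(nat set \<times> (nat \<times> nat) set) set" where
  "P3_orientations = {({0,1,2}, {e1, e2}) | e1 e2.
      e1 \<in> {(0,1),(1,0)} \<and> e2 \<in> {(1,2),(2,1)}}"

definition ordered_degree :: "('a \<times> 'a) set \<Rightarrow> 'a \<Rightarrow> nat" where
  "ordered_degree A v = card {u. (u, v) \<in> A \<or> (v, u) \<in> A}"

end

theory Submission
  imports Defs "HOL-Library.Disjoint_Sets"
begin

text \<open>The graph is the rainbow matching with edges \<open>{i, 2n - 1 - i}\<close>, \<open>i < n\<close>, on
\<open>0 < \<dots> < 2n - 1\<close>, each edge directed upwards if its lower endpoint is even and downwards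
otherwise. All edges have the same endpoint sum, which rules out \<open>M\<^sub>2\<close> and \<open>P\<^sub>3\<close>.
A monotone homomorphism \<open>f\<close> must separate the ends \<open>n - 1, n\<close> of the innermost edge, and
for \<open>i < n - 1\<close> it cannot collapse both gaps \<open>(i, i + 1)\<close> and \<open>(2n - 2 - i, 2n - 1 - i)\<close>:
the edges at \<open>i\<close> and \<open>i + 1\<close> are oppositely oriented and would become opposite arcs.
So \<open>f\<close> has at least \<open>n\<close> strict ascents and takes at least \<open>n + 1\<close> values. Conversely,
collapsing the upper half onto \<open>n\<close> maps the graph onto an oriented star with \<open>n + 1\<close>
vertices.\<close>

lemma card_le_card_if_meets_disjoint_family:
  assumes "finite S" and "disjoint_family_on G I" and "\<And>i. i \<in> I \<Longrightarrow> G i \<inter> S \<noteq> {}"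
  shows "card I \<le> card S"
proof -
  have "\<forall>i\<in>I. \<exists>x. x \<in> G i \<inter> S"
    using assms(3) by blast
  then obtain g where g: "\<And>i. i \<in> I \<Longrightarrow> g i \<in> G i \<inter> S"
    by metis
  have "inj_on g I"
  proof (rule inj_onI)
    fix i j assume "i \<in> I" "j \<in> I" "g i = g j"
    then have "G i \<inter> G j \<noteq> {}"
      using g by (metis IntD1 IntI empty_iff)
    then show "i = j"
      using assms(2) \<open>i \<in> I\<close> \<open>j \<in> I\<close> by (auto simp: disjoint_family_on_def)
  qed
  then show ?thesis
    using g assms(1) by (intro card_inj_on_le) auto
qed

lemma card_ascents_less_card_image:
  fixes f :: "nat \<Rightarrow> 'a::linorder"
  assumes "mono_on {0..m} f"
  shows "card {k. k < m \<and> f k < f (Suc k)} < card (f ` {0..m})"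
proof -
  define S where "S = {k. k < m \<and> f k < f (Suc k)}"
  have "inj_on (\<lambda>k. f (Suc k)) S"
  proof (rule linorder_inj_onI')
    fix k l assume "k \<in> S" "l \<in> S" "k < l"
    then have "f (Suc k) \<le> f l" and "f l < f (Suc l)"
      using assms by (auto simp: S_def mono_on_def)
    then show "f (Suc k) \<noteq> f (Suc l)" by simp
  qed
  moreover have "(\<lambda>k. f (Suc k)) ` S \<subseteq> f ` {0..m} - {f 0}"
  proof clarify
    fix k assume "k \<in> S"
    then have "f 0 \<le> f k" and "f k < f (Suc k)"
      using assms by (auto simp: S_def mono_on_def)
    then show "f (Suc k) \<in> f ` {0..m} - {f 0}"
      using \<open>k \<in> S\<close> by (auto simp: S_def)
  qed
  ultimately have "card S \<le> card (f ` {0..m} - {f 0})"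
    by (intro card_inj_on_le) auto
  also have "\<dots> < card (f ` {0..m})"
    by (intro psubset_card_mono) auto
  finally show ?thesis by (simp add: S_def)
qed

definition parity_orient :: "(nat \<Rightarrow> nat \<Rightarrow> bool) \<Rightarrow> (nat \<times> nat) set" where
  "parity_orient E = {(u, v). E u v \<and> (u < v \<longleftrightarrow> even (min u v))}"

lemma oriented_ordered_graph_parity_orient:
  assumes "finite V" and "\<And>u v. E u v \<Longrightarrow> u \<in> V \<and> v \<in> V" and "\<And>u. \<not> E u u"
  shows "oriented_ordered_graph V (parity_orient E)"
  using assms unfolding oriented_ordered_graph_def parity_orient_def
  by (auto simp: min.commute) (metis linorder_neqE_nat)

lemma parity_orient_either_direction:
  assumes "\<And>u v. E u v \<Longrightarrow> E v u" and "u \<noteq> v"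
  shows "(u, v) \<in> parity_orient E \<or> (v, u) \<in> parity_orient E \<longleftrightarrow> E u v"
  using assms unfolding parity_orient_def by (auto simp: min.commute)

lemma parity_orient_opposite:
  assumes "\<And>u v. E u v \<Longrightarrow> E v u" and "E a b" "E a' b'" "a < b" "a' < b'" "odd (a + a')"
  shows "(a, b) \<in> parity_orient E \<and> (b', a') \<in> parity_orient E \<or>
    (b, a) \<in> parity_orient E \<and> (a', b') \<in> parity_orient E"
  using assms unfolding parity_orient_def by auto

lemma ordered_hom_arc_ends_differ:
  assumes "oriented_ordered_graph W B" and "ordered_hom V A W B f" and "(a, b) \<in> A"
  shows "f a \<noteq> f b"
  using assms unfolding oriented_ordered_graph_def ordered_hom_def by blast

lemma ordered_hom_opposite_arcs:
  assumes "oriented_ordered_graph W B" and "ordered_hom V A W B f"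
    and "(a, b) \<in> A" and "(b', a') \<in> A"
  shows "f a \<noteq> f a' \<or> f b \<noteq> f b'"
  using assms unfolding oriented_ordered_graph_def ordered_hom_def by metis

lemma oriented_ordered_chi_eqI:
  fixes W :: "nat set"
  assumes "oriented_ordered_graph W B" and "ordered_hom V A W B f" and "card W = k"
    and "\<And>(W' :: nat set) B' f'. oriented_ordered_graph W' B' \<Longrightarrow> ordered_hom V A W' B' f' \<Longrightarrow>
      k \<le> card W'"
  shows "oriented_ordered_chi V A = k"
  unfolding oriented_ordered_chi_def
  by (rule Least_equality) (use assms in blast)+

lemma not_contains_M2_if_arcs_antidiagonal:
  fixes A :: "(nat \<times> nat) set"
  assumes "\<And>u v. (u, v) \<in> A \<Longrightarrow> u + v = c" and "(P, Q) \<in> M2_orientations"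
  shows "\<not> contains_ordered_subgraph V A P Q"
proof
  assume "contains_ordered_subgraph V A P Q"
  then obtain f where f_mono: "strict_mono_on P f"
    and f_arcs: "\<And>u v. (u, v) \<in> Q \<Longrightarrow> (f u, f v) \<in> A"
    unfolding contains_ordered_subgraph_def by blast
  have P: "P = {0, 1, 2, 3}" and "(0, 1) \<in> Q \<or> (1, 0) \<in> Q" and "(2, 3) \<in> Q \<or> (3, 2) \<in> Q"
    using assms(2) unfolding M2_orientations_def by auto
  moreover have "f x + f y = c" if "(x, y) \<in> Q \<or> (y, x) \<in> Q" for x y
    using that f_arcs assms(1) by (metis add.commute)
  ultimately have "f 0 + f 1 = c" and "f 2 + f 3 = c"
    by blast+
  moreover have "f 0 < f 2" and "f 1 < f 3"
    using f_mono unfolding P strict_mono_on_def by simp_all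
  ultimately show False by simp
qed

lemma not_contains_P3_if_arcs_antidiagonal:
  fixes A :: "(nat \<times> nat) set"
  assumes "\<And>u v. (u, v) \<in> A \<Longrightarrow> u + v = c" and "(P, Q) \<in> P3_orientations"
  shows "\<not> contains_ordered_subgraph V A P Q"
proof
  assume "contains_ordered_subgraph V A P Q"
  then obtain f where f_mono: "strict_mono_on P f"
    and f_arcs: "\<And>u v. (u, v) \<in> Q \<Longrightarrow> (f u, f v) \<in> A"
    unfolding contains_ordered_subgraph_def by blast
  have P: "P = {0, 1, 2}" and "(0, 1) \<in> Q \<or> (1, 0) \<in> Q" and "(1, 2) \<in> Q \<or> (2, 1) \<in> Q"
    using assms(2) unfolding P3_orientations_def by auto
  moreover have "f x + f y = c" if "(x, y) \<in> Q \<or> (y, x) \<in> Q" for x y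
    using that f_arcs assms(1) by (metis add.commute)
  ultimately have "f 0 + f 1 = c" and "f 1 + f 2 = c"
    by blast+
  moreover have "f 0 < f 2"
    using f_mono unfolding P strict_mono_on_def by simp
  ultimately show False by simp
qed

definition rainbow :: "nat \<Rightarrow> (nat \<times> nat) set" where
  "rainbow n = parity_orient (\<lambda>u v. u + v + 1 = 2 * n)"

lemma rainbow_arc_sum: "(u, v) \<in> rainbow n \<Longrightarrow> u + v + 1 = 2 * n"
  unfolding rainbow_def parity_orient_def by simp

lemma oriented_ordered_graph_rainbow: "oriented_ordered_graph {0..<2 * n} (rainbow n)"
  unfolding rainbow_def by (rule oriented_ordered_graph_parity_orient) (auto, presburger)

lemma rainbow_either_direction:
  "(u, v) \<in> rainbow n \<or> (v, u) \<in> rainbow n \<longleftrightarrow> u + v + 1 = 2 * n"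
proof (cases "u = v")
  case True
  have "u + u + 1 \<noteq> 2 * n" by presburger
  then show ?thesis using True by (auto dest: rainbow_arc_sum)
next
  case False
  then show ?thesis unfolding rainbow_def by (subst parity_orient_either_direction) auto
qed

lemma ordered_degree_rainbow:
  assumes "v < 2 * n"
  shows "ordered_degree (rainbow n) v = 1"
proof -
  have "{u. (u, v) \<in> rainbow n \<or> (v, u) \<in> rainbow n} = {2 * n - 1 - v}"
    unfolding rainbow_either_direction using assms by auto
  then show ?thesis unfolding ordered_degree_def by simp
qed

abbreviation star :: "nat \<Rightarrow> (nat \<times> nat) set" where
  "star n \<equiv> parity_orient (\<lambda>u v. u \<noteq> v \<and> max u v = n)"

lemma oriented_ordered_graph_star: "oriented_ordered_graph {0..n} (star n)"
  by (rule oriented_ordered_graph_parity_orient) auto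

lemma ordered_hom_rainbow_star:
  "ordered_hom {0..<2 * n} (rainbow n) {0..n} (star n) (\<lambda>u. min u n)"
  unfolding ordered_hom_def
proof (intro conjI allI ballI impI)
  fix u v assume "(u, v) \<in> rainbow n"
  then have sum: "u + v + 1 = 2 * n" and dir: "u < v \<longleftrightarrow> even (min u v)"
    unfolding rainbow_def parity_orient_def by auto
  show "(min u n, min v n) \<in> star n"
  proof (cases "u < v")
    case True
    with sum have "u < n" and "n \<le> v" by linarith+
    with True dir show ?thesis unfolding parity_orient_def by simp
  next
    case False
    with sum have "v < n" and "n \<le> u" by linarith+
    with False dir show ?thesis unfolding parity_orient_def by (simp add: min_def)
  qed
qed auto

lemma ordered_hom_rainbow_ascent:
  assumes W: "oriented_ordered_graph W B" and f: "ordered_hom {0..<2 * n} (rainbow n) W B f"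
    and "i < n"
  shows "{i, 2 * n - 2 - i} \<inter> {k. k < 2 * n - 1 \<and> f k < f (Suc k)} \<noteq> {}"
proof -
  have mono: "f u \<le> f v" if "u \<le> v" and "v < 2 * n" for u v
    using f that unfolding ordered_hom_def by auto
  show ?thesis
  proof (cases "i = n - 1")
    case True
    have "(n - 1, n) \<in> rainbow n \<or> (n, n - 1) \<in> rainbow n"
      using \<open>i < n\<close> by (simp add: rainbow_either_direction)
    then have "f (n - 1) \<noteq> f n"
      using ordered_hom_arc_ends_differ[OF W f] by metis
    moreover have "f (n - 1) \<le> f n"
      using \<open>i < n\<close> by (intro mono) auto
    ultimately show ?thesis
      using True \<open>i < n\<close> by auto
  next
    case False
    have "(i, 2 * n - 1 - i) \<in> rainbow n \<and> (2 * n - 2 - i, Suc i) \<in> rainbow n \<or>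
        (2 * n - 1 - i, i) \<in> rainbow n \<and> (Suc i, 2 * n - 2 - i) \<in> rainbow n"
      unfolding rainbow_def using False \<open>i < n\<close> by (intro parity_orient_opposite) auto
    then have "f i \<noteq> f (Suc i) \<or> f (2 * n - 1 - i) \<noteq> f (2 * n - 2 - i)"
      using ordered_hom_opposite_arcs[OF W f] by blast
    moreover have "f i \<le> f (Suc i)" and "f (2 * n - 2 - i) \<le> f (Suc (2 * n - 2 - i))"
      using False \<open>i < n\<close> by (auto intro!: mono)
    moreover have "Suc (2 * n - 2 - i) = 2 * n - 1 - i"
      using False \<open>i < n\<close> by simp
    ultimately show ?thesis
      using False \<open>i < n\<close> by auto
  qed
qed

lemma card_ge_if_ordered_hom_rainbow:
  assumes "n \<ge> 1" and W: "oriented_ordered_graph W B"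
    and f: "ordered_hom {0..<2 * n} (rainbow n) W B f"
  shows "n + 1 \<le> card W"
proof -
  let ?S = "{k. k < 2 * n - 1 \<and> f k < f (Suc k)}"
  have vertices: "{0..2 * n - 1} = {0..<2 * n}"
    using assms(1) by auto
  have mono: "mono_on {0..2 * n - 1} f"
    using f unfolding vertices ordered_hom_def mono_on_def by blast
  have "disjoint_family_on (\<lambda>i. {i, 2 * n - 2 - i}) {..<n}"
    unfolding disjoint_family_on_def by auto
  then have "n \<le> card ?S"
    using card_le_card_if_meets_disjoint_family[of ?S _ "{..<n}"] ordered_hom_rainbow_ascent[OF W f]
    by simp
  also have "card ?S < card (f ` {0..2 * n - 1})"
    using card_ascents_less_card_image[OF mono] .
  also have "\<dots> \<le> card W"
    using f W unfolding vertices ordered_hom_def oriented_ordered_graph_def by (simp add: card_mono)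
  finally show ?thesis by simp
qed

theorem proposition3:
  fixes n :: nat
  assumes "n \<ge> 1"
  shows "\<exists>(V::nat set) A. oriented_ordered_graph V A \<and> card V = 2 * n \<and>
    (\<forall>v\<in>V. ordered_degree A v = 1) \<and>
    (\<forall>(P, Q)\<in>M2_orientations. \<not> contains_ordered_subgraph V A P Q) \<and>
    (\<forall>(P, Q)\<in>P3_orientations. \<not> contains_ordered_subgraph V A P Q) \<and>
    oriented_ordered_chi V A = n + 1"
proof (intro exI conjI)
  show "oriented_ordered_graph {0..<2 * n} (rainbow n)"
    by (rule oriented_ordered_graph_rainbow)
  show "card {0..<2 * n} = 2 * n"
    by simp
  show "\<forall>v\<in>{0..<2 * n}. ordered_degree (rainbow n) v = 1"
    by (simp add: ordered_degree_rainbow)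
  have antidiagonal: "u + v = 2 * n - 1" if "(u, v) \<in> rainbow n" for u v
    using rainbow_arc_sum[OF that] by simp
  show "\<forall>(P, Q)\<in>M2_orientations. \<not> contains_ordered_subgraph {0..<2 * n} (rainbow n) P Q"
    using not_contains_M2_if_arcs_antidiagonal[OF antidiagonal] by blast
  show "\<forall>(P, Q)\<in>P3_orientations. \<not> contains_ordered_subgraph {0..<2 * n} (rainbow n) P Q"
    using not_contains_P3_if_arcs_antidiagonal[OF antidiagonal] by blast
  show "oriented_ordered_chi {0..<2 * n} (rainbow n) = n + 1"
    using card_ge_if_ordered_hom_rainbow[OF assms]
    by (intro oriented_ordered_chi_eqI[OF oriented_ordered_graph_star ordered_hom_rainbow_star]) auto
qed

end
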